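(* Let $X$ be a $T_0$ space that is $\operatorname{Irr}$-continuous and $k$-bounded sober. Then $\ll_{\operatorname{Irr}}$ has the interpolation property: whenever $z\ll_{\operatorname{Irr}} x$, there exists $y\in X$ with $z\ll_{\operatorname{Irr}} y\ll_{\operatorname{Irr}} x$.
   Context: For a topological space $X$, a nonempty subset $E$ is irreducible if whenever $E\subseteq A_1\cup A_2$ with $A_1,A_2$ closed, $E\subseteq A_1$ or $E\subseteq A_2$. The specialisation order is $x\le y$ iff $x\in\operatorname{cl}(\{y\})$; $\uparrow x=\{z:z\ge x\}$; $\bigvee$ denotes supremum in this order. $\operatorname{Irr}^+(X)$ is the set of irreducible subsets whose supremum exists. $X$ is $k$-bounded sober if every closed set $F\in\operatorname{Irr}^+(X)$ is the closure of a unique singleton. $x\ll_{\operatorname{Irr}} y$ iff for every $E\in\operatorname{Irr}^+(X)$ with $\bigvee E\ge y$, $E\cap\uparrow x\ne\emptyset$; $\twoheaddownarrow_{\operatorname{Irr}} x=\{y:y\ll_{\operatorname{Irr}} x\}$. $X$ is $\operatorname{Irr}$-continuous if for every $x$, $\twoheaddownarrow_{\operatorname{Irr}} x$ is irreducible and $x=\bigvee\twoheaddownarrow_{\operatorname{Irr}} x$. *)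

theory Defs
  imports "HOL-Analysis.Analysis"
begin

definition spec_le :: "'a topology \<Rightarrow> 'a \<Rightarrow> 'a \<Rightarrow> bool" where
  "spec_le X x y \<longleftrightarrow> x \<in> X closure_of {y}"

definition upset :: "'a topology \<Rightarrow> 'a \<Rightarrow> 'a set" where
  "upset X x = {z \<in> topspace X. spec_le X x z}"

definition is_sup :: "'a topology \<Rightarrow> 'a set \<Rightarrow> 'a \<Rightarrow> bool" where
  "is_sup X E s \<longleftrightarrow> s \<in> topspace X \<and> (\<forall>e\<in>E. spec_le X e s) \<and>
     (\<forall>u\<in>topspace X. (\<forall>e\<in>E. spec_le X e u) \<longrightarrow> spec_le X s u)"

definition irreducible_set :: "'a topology \<Rightarrow> 'a set \<Rightarrow> bool" where
  "irreducible_set X E \<longleftrightarrow> E \<noteq> {} \<and> E \<subseteq> topspace X \<and>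
     (\<forall>A1 A2. closedin X A1 \<and> closedin X A2 \<and> E \<subseteq> A1 \<union> A2 \<longrightarrow> E \<subseteq> A1 \<or> E \<subseteq> A2)"

definition Irr_plus :: "'a topology \<Rightarrow> 'a set set" where
  "Irr_plus X = {E. irreducible_set X E \<and> (\<exists>s. is_sup X E s)}"

definition k_bounded_sober :: "'a topology \<Rightarrow> bool" where
  "k_bounded_sober X \<longleftrightarrow> (\<forall>F. closedin X F \<and> F \<in> Irr_plus X \<longrightarrow>
     (\<exists>!x. x \<in> topspace X \<and> F = X closure_of {x}))"

definition irr_way_below :: "'a topology \<Rightarrow> 'a \<Rightarrow> 'a \<Rightarrow> bool" where
  "irr_way_below X x y \<longleftrightarrow> (\<forall>E\<in>Irr_plus X. (\<forall>s. is_sup X E s \<longrightarrow> spec_le X y s)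
      \<longrightarrow> E \<inter> upset X x \<noteq> {})"

definition irr_wb_set :: "'a topology \<Rightarrow> 'a \<Rightarrow> 'a set" where
  "irr_wb_set X x = {y \<in> topspace X. irr_way_below X y x}"

definition irr_continuous :: "'a topology \<Rightarrow> bool" where
  "irr_continuous X \<longleftrightarrow> (\<forall>x\<in>topspace X. irreducible_set X (irr_wb_set X x) \<and>
      is_sup X (irr_wb_set X x) x)"

end

theory Submission
  imports Defs
begin

text \<open>Let \<open>W x\<close> be the set of points \<open>\<ll>\<^sub>I\<^sub>r\<^sub>r\<close>-below \<open>x\<close> and \<open>E = \<Union>y\<in>W x. W y\<close>.
  Irreducibility of a set and its suprema depend only on its closure, and \<open>E\<close> has the same
  closure as \<open>W x\<close>: every point of \<open>W y\<close> lies below \<open>y\<close>, and \<open>k\<close>-bounded sobriety puts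
  \<open>y = \<Or>W y\<close> into the closure of \<open>W y\<close>. Hence \<open>E\<close> is irreducible with supremum \<open>x\<close>, so
  \<open>z \<ll>\<^sub>I\<^sub>r\<^sub>r x\<close> yields \<open>z \<le> w\<close> for some \<open>w \<ll>\<^sub>I\<^sub>r\<^sub>r y \<ll>\<^sub>I\<^sub>r\<^sub>r x\<close>, and then \<open>z \<ll>\<^sub>I\<^sub>r\<^sub>r y\<close>.\<close>

lemma spec_le_closedin: "closedin X A \<Longrightarrow> b \<in> A \<Longrightarrow> spec_le X a b \<Longrightarrow> a \<in> A"
  unfolding spec_le_def by (meson closure_of_minimal empty_subsetI insert_subset subsetD)

lemma spec_le_trans: "spec_le X a b \<Longrightarrow> spec_le X b c \<Longrightarrow> spec_le X a c"
  using spec_le_closedin[of X "X closure_of {c}" b a] unfolding spec_le_def by simp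

lemma upper_bound_iff_closure_of_subset:
  assumes "E \<subseteq> topspace X"
  shows "(\<forall>e\<in>E. spec_le X e u) \<longleftrightarrow> X closure_of E \<subseteq> X closure_of {u}"
  using closure_of_subset[OF assms] closure_of_minimal[of E "X closure_of {u}" X]
  unfolding spec_le_def by auto

lemma is_sup_cong_closure_of:
  assumes "E \<subseteq> topspace X" "D \<subseteq> topspace X" "X closure_of E = X closure_of D"
  shows "is_sup X E s \<longleftrightarrow> is_sup X D s"
  using assms upper_bound_iff_closure_of_subset[of E X] upper_bound_iff_closure_of_subset[of D X]
  unfolding is_sup_def by simp

lemma irreducible_set_cong_closure_of:
  assumes irr: "irreducible_set X D" and E: "E \<subseteq> topspace X"
    and cl: "X closure_of E = X closure_of D"
  shows "irreducible_set X E"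
  unfolding irreducible_set_def
proof (intro conjI allI impI)
  have D: "D \<subseteq> topspace X" using irr unfolding irreducible_set_def by blast
  have closure_below: "E \<subseteq> A \<longleftrightarrow> D \<subseteq> A" if "closedin X A" for A
    using closure_of_minimal_eq[OF E that] closure_of_minimal_eq[OF D that] cl by simp
  show "E \<noteq> {}"
    using closure_below[of "{}"] irr unfolding irreducible_set_def by auto
  show "E \<subseteq> topspace X" by fact
  fix A1 A2 assume A: "closedin X A1 \<and> closedin X A2 \<and> E \<subseteq> A1 \<union> A2"
  then have "D \<subseteq> A1 \<union> A2" using closure_below[of "A1 \<union> A2"] by blast
  then have "D \<subseteq> A1 \<or> D \<subseteq> A2" using A irr unfolding irreducible_set_def by blast
  then show "E \<subseteq> A1 \<or> E \<subseteq> A2" using A closure_below by blast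
qed

lemma k_bounded_sober_is_sup_in_closure_of:
  assumes kb: "k_bounded_sober X" and irr: "irreducible_set X E" and sup: "is_sup X E y"
  shows "y \<in> X closure_of E"
proof -
  have E: "E \<subseteq> topspace X" using irr unfolding irreducible_set_def by blast
  have same_closure: "X closure_of (X closure_of E) = X closure_of E" by simp
  have "X closure_of E \<in> Irr_plus X"
    using irreducible_set_cong_closure_of[OF irr _ same_closure]
      is_sup_cong_closure_of[OF _ E same_closure] sup
    unfolding Irr_plus_def by (auto simp: closure_of_subset_topspace)
  then have "\<exists>!c. c \<in> topspace X \<and> X closure_of E = X closure_of {c}"
    using kb unfolding k_bounded_sober_def by simp
  then obtain c where c: "c \<in> topspace X" "X closure_of E = X closure_of {c}"
    by (auto dest: ex1_implies_ex)
  then have "\<forall>e\<in>E. spec_le X e c" using upper_bound_iff_closure_of_subset[OF E] by simp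
  then have "spec_le X y c" using sup c(1) unfolding is_sup_def by blast
  then show ?thesis using c(2) unfolding spec_le_def by simp
qed

lemma closure_of_UN_eq:
  assumes "D \<subseteq> topspace X" "\<And>y. y \<in> D \<Longrightarrow> S y \<subseteq> topspace X"
    and "\<And>y. y \<in> D \<Longrightarrow> y \<in> X closure_of S y"
    and "\<And>y w. y \<in> D \<Longrightarrow> w \<in> S y \<Longrightarrow> spec_le X w y"
  shows "X closure_of (\<Union>y\<in>D. S y) = X closure_of D"
proof (rule antisym)
  have "\<Union>(S ` D) \<subseteq> X closure_of D"
  proof (intro UN_least subsetI)
    fix y w assume "y \<in> D" "w \<in> S y"
    then show "w \<in> X closure_of D"
      using spec_le_closedin[OF closedin_closure_of _ assms(4)] closure_of_subset[OF assms(1)]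
      by blast
  qed
  then show "X closure_of \<Union>(S ` D) \<subseteq> X closure_of D" by (simp add: closure_of_minimal)
  have "D \<subseteq> X closure_of \<Union>(S ` D)"
    using assms(3) closure_of_mono[of _ "\<Union>(S ` D)" X] by blast
  then show "X closure_of D \<subseteq> X closure_of \<Union>(S ` D)" by (simp add: closure_of_minimal)
qed

lemma irr_way_belowD:
  "irr_way_below X z x \<Longrightarrow> E \<in> Irr_plus X \<Longrightarrow> is_sup X E x \<Longrightarrow> E \<inter> upset X z \<noteq> {}"
  unfolding irr_way_below_def is_sup_def by blast

lemma irr_way_below_spec_le_left:
  assumes "spec_le X z w" "irr_way_below X w y"
  shows "irr_way_below X z y"
  unfolding irr_way_below_def
proof (intro ballI impI)
  fix E assume E: "E \<in> Irr_plus X" "\<forall>s. is_sup X E s \<longrightarrow> spec_le X y s"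
  have "E \<inter> upset X w \<noteq> {}"
    using assms(2)[unfolded irr_way_below_def, rule_format, OF E(1) E(2)[rule_format]] .
  moreover have "upset X w \<subseteq> upset X z"
    using spec_le_trans[OF assms(1)] unfolding upset_def by blast
  ultimately show "E \<inter> upset X z \<noteq> {}" by blast
qed

lemma irr_wb_set_subset_topspace: "irr_wb_set X x \<subseteq> topspace X"
  unfolding irr_wb_set_def by blast

lemma Irr_plus_UN_irr_wb_set:
  assumes cont: "irr_continuous X" and kb: "k_bounded_sober X" and x: "x \<in> topspace X"
  defines "E \<equiv> \<Union>y\<in>irr_wb_set X x. irr_wb_set X y"
  shows "E \<in> Irr_plus X" and "is_sup X E x"
proof -
  let ?W = "irr_wb_set X"
  have cont_at: "irreducible_set X (?W y) \<and> is_sup X (?W y) y" if "y \<in> topspace X" for y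
    using cont that unfolding irr_continuous_def by blast
  have cl: "X closure_of E = X closure_of ?W x"
    unfolding E_def
  proof (rule closure_of_UN_eq[OF irr_wb_set_subset_topspace irr_wb_set_subset_topspace])
    fix y assume "y \<in> ?W x"
    then have y: "irreducible_set X (?W y)" "is_sup X (?W y) y"
      using cont_at irr_wb_set_subset_topspace[of X x] by blast+
    show "y \<in> X closure_of ?W y" using k_bounded_sober_is_sup_in_closure_of[OF kb y] .
    show "spec_le X w y" if "w \<in> ?W y" for w using that y(2) unfolding is_sup_def by blast
  qed
  have E: "E \<subseteq> topspace X" unfolding E_def irr_wb_set_def by blast
  show "is_sup X E x"
    using is_sup_cong_closure_of[OF E irr_wb_set_subset_topspace cl] cont_at[OF x] by blast
  then show "E \<in> Irr_plus X"
    using irreducible_set_cong_closure_of[OF _ E cl] cont_at[OF x] unfolding Irr_plus_def by blast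
qed

theorem theorem3p5:
  fixes X :: "'a topology"
  assumes "t0_space X" and "irr_continuous X" and "k_bounded_sober X"
  shows "\<forall>x\<in>topspace X. \<forall>z\<in>topspace X. irr_way_below X z x \<longrightarrow>
           (\<exists>y\<in>topspace X. irr_way_below X z y \<and> irr_way_below X y x)"
proof (intro ballI impI)
  fix x z assume x: "x \<in> topspace X" and "z \<in> topspace X" and zx: "irr_way_below X z x"
  let ?E = "\<Union>y\<in>irr_wb_set X x. irr_wb_set X y"
  have "?E \<inter> upset X z \<noteq> {}"
    using irr_way_belowD[OF zx] Irr_plus_UN_irr_wb_set[OF assms(2,3) x] by blast
  then obtain w where "w \<in> ?E" and zw: "spec_le X z w"
    unfolding upset_def by auto
  then obtain y where y: "y \<in> irr_wb_set X x" and w: "w \<in> irr_wb_set X y"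
    by blast
  have "irr_way_below X w y" using w unfolding irr_wb_set_def by simp
  then have "irr_way_below X z y" by (rule irr_way_below_spec_le_left[OF zw])
  with y show "\<exists>y\<in>topspace X. irr_way_below X z y \<and> irr_way_below X y x"
    unfolding irr_wb_set_def by blast
qed

end
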